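(* Let $(\Omega, \Sigma, \mu, S)$ be a dynamical system which is asymptotically stationary. Let $\Pi \subset \Sigma$ be a $\pi$-system such that $\sigma(\Pi) = \Sigma$ and $$\lim_{k \to \infty} \sup_{i \in \mathbb{N}} \left|\mu(S^{-i}A \cap S^{-k}S^{-i}B) - \mu(S^{-i}A)\,\mu(S^{-k}S^{-i}B)\right| = 0$$ for all $A, B \in \Pi$. Then this limit relation holds for all $A, B \in \Sigma$.
   Context: A dynamical system $(\Omega,\Sigma,\mu,S)$ consists of a probability space $(\Omega,\Sigma,\mu)$ and a measurable map $S:\Omega\to\Omega$; $S^k$ denotes the $k$-fold composition and $S^{-k}A=(S^k)^{-1}(A)$. It is asymptotically stationary (with stationary limit $\nu$) if $\nu(A)=\lim_{k\to\infty}\mu(S^{-k}A)$ exists for every $A\in\Sigma$. $\mathbb{N}=\{1,2,\dots\}$. $\sigma(\Pi)$ is the $\sigma$-algebra generated by $\Pi$. *)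

theory Defs
  imports "HOL-Probability.Probability"
begin

definition preim :: "'a measure \<Rightarrow> ('a \<Rightarrow> 'a) \<Rightarrow> nat \<Rightarrow> 'a set \<Rightarrow> 'a set" where
  "preim M S k A = (S ^^ k) -` A \<inter> space M"

definition asymptotically_stationary :: "'a measure \<Rightarrow> ('a \<Rightarrow> 'a) \<Rightarrow> bool" where
  "asymptotically_stationary M S \<longleftrightarrow>
     (\<forall>A\<in>sets M. convergent (\<lambda>k. measure M (preim M S k A)))"

definition mix_rel :: "'a measure \<Rightarrow> ('a \<Rightarrow> 'a) \<Rightarrow> 'a set \<Rightarrow> 'a set \<Rightarrow> bool" where
  "mix_rel M S A B \<longleftrightarrow>
     (\<lambda>k. SUP i\<in>{1..}. \<bar>measure M (preim M S i A \<inter> preim M S k (preim M S i B))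
                       - measure M (preim M S i A) * measure M (preim M S k (preim M S i B))\<bar>)
     \<longlonglongrightarrow> 0"

end

theory Submission
  imports Defs
begin

text \<open>
  Fixing \<open>B\<close>, the sets \<open>A\<close> for which \<open>S\<^sup>-\<^sup>i A\<close> and \<open>S\<^sup>-\<^sup>k S\<^sup>-\<^sup>i B\<close> decorrelate
  uniformly in \<open>i\<close> form a Dynkin system: complements and finite disjoint unions are handled by
  the additivity of the covariance, and for countable disjoint unions one needs the tail
  \<open>\<Union>\<^sub>n\<^sub>\<ge>\<^sub>N A\<^sub>n\<close> to be small under all the measures \<open>\<mu> \<circ> S\<^sup>-\<^sup>n\<close> at once. The latter is
  where asymptotic stationarity enters: a setwise convergent sequence of finite measures is
  uniformly continuous from above (a Vitali--Hahn--Saks type statement, proved by a gliding hump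
  argument). The \<open>\<pi>\<close>-\<open>\<lambda>\<close> theorem, applied first in \<open>A\<close> and then in \<open>B\<close>, gives the claim.
\<close>

section \<open>Setwise convergent sequences of finite measures\<close>

locale setwise_convergent_measures =
  fixes M :: "'a measure" and Ms :: "nat \<Rightarrow> 'a measure"
  assumes finite_measure_Ms: "finite_measure (Ms n)"
    and sets_Ms [simp]: "sets (Ms n) = sets M"
    and convergent_measure_Ms: "X \<in> sets M \<Longrightarrow> convergent (\<lambda>n. measure (Ms n) X)"
begin

definition limit_measure :: "'a set \<Rightarrow> real" where
  "limit_measure X = lim (\<lambda>n. measure (Ms n) X)"

lemma LIMSEQ_limit_measure: "X \<in> sets M \<Longrightarrow> (\<lambda>n. measure (Ms n) X) \<longlonglongrightarrow> limit_measure X"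
  unfolding limit_measure_def using convergent_measure_Ms convergent_LIMSEQ_iff by blast

lemma measure_Ms_mono: "X \<subseteq> Y \<Longrightarrow> Y \<in> sets M \<Longrightarrow> measure (Ms n) X \<le> measure (Ms n) Y"
  using finite_measure.finite_measure_mono[OF finite_measure_Ms] by simp

lemma limit_measure_mono:
  "X \<subseteq> Y \<Longrightarrow> X \<in> sets M \<Longrightarrow> Y \<in> sets M \<Longrightarrow> limit_measure X \<le> limit_measure Y"
  by (rule LIMSEQ_le[OF LIMSEQ_limit_measure LIMSEQ_limit_measure]) (auto intro: measure_Ms_mono)

lemma measure_Ms_decseq_vanishes:
  assumes "range C \<subseteq> sets M" "decseq C" "(\<Inter>N. C N) = {}"
  shows "(\<lambda>N. measure (Ms n) (C N)) \<longlonglongrightarrow> 0"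
  using finite_measure.finite_Lim_measure_decseq[OF finite_measure_Ms, of C n] assms by simp

lemma gliding_hump_step:
  assumes C: "range C \<subseteq> sets M" "decseq C" "(\<Inter>N. C N) = {}"
    and hump: "\<And>N. \<exists>n. measure (Ms n) (C N) > e" and "e > 0"
    and F: "F \<in> sets M"
  obtains n a b where "n \<ge> n0" "a \<ge> N0" "a < b"
    "measure (Ms n) (C a - C b) > e/2" "measure (Ms n) (C b) \<le> e/8"
    "\<bar>measure (Ms n) F - limit_measure F\<bar> \<le> e/16"
proof -
  obtain n1 where n1: "\<And>n. n \<ge> n1 \<Longrightarrow> \<bar>measure (Ms n) F - limit_measure F\<bar> < e/16"
    using LIMSEQ_limit_measure[OF F] \<open>e > 0\<close> unfolding LIMSEQ_iff
    by (metis real_norm_def divide_pos_pos zero_less_numeral)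
  have "\<forall>\<^sub>F N in sequentially. \<forall>n\<in>{..<max n0 n1}. measure (Ms n) (C N) < e"
    using measure_Ms_decseq_vanishes[OF C] \<open>e > 0\<close>
    by (intro eventually_ball_finite) (auto dest: order_tendstoD(2))
  then obtain N where "\<And>a. a \<ge> N \<Longrightarrow> \<forall>n<max n0 n1. measure (Ms n) (C a) < e"
    unfolding eventually_sequentially by auto
  then obtain a where a: "a \<ge> N0" "\<And>n. n < max n0 n1 \<Longrightarrow> measure (Ms n) (C a) < e"
    using max.cobounded1 max.cobounded2 by blast
  \<comment> \<open>The hump at \<open>C a\<close> can only occur at a late index \<open>n\<close>.\<close>
  obtain n where n: "measure (Ms n) (C a) > e"
    using hump by blast
  with a(2) have "n \<ge> max n0 n1"
    by (meson less_asym not_le)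
  have "\<forall>\<^sub>F b in sequentially. measure (Ms n) (C b) < e/8"
    using measure_Ms_decseq_vanishes[OF C] \<open>e > 0\<close> by (intro order_tendstoD(2)) auto
  then obtain b where b: "b > a" "measure (Ms n) (C b) < e/8"
    unfolding eventually_sequentially by (metis less_add_one max.cobounded1 max.cobounded2 order.strict_trans2)
  have "C b \<subseteq> C a"
    using C(2) b(1) by (simp add: decseq_def)
  then have "measure (Ms n) (C a - C b) = measure (Ms n) (C a) - measure (Ms n) (C b)"
    using C(1) finite_measure.finite_measure_Diff[OF finite_measure_Ms] by auto
  moreover have "\<bar>measure (Ms n) F - limit_measure F\<bar> \<le> e/16"
    using n1 \<open>n \<ge> max n0 n1\<close> by fastforce
  ultimately show ?thesis
    using that[of n a b] \<open>n \<ge> max n0 n1\<close> \<open>e > 0\<close> a(1) b n by auto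
qed

lemma no_gliding_hump:
  assumes C: "range C \<subseteq> sets M" "decseq C" and "e > 0"
    and n: "strict_mono n"
    and ab: "\<And>j. a j < b j" "\<And>j. b j \<le> a (Suc j)"
    and hump: "\<And>j. measure (Ms (n j)) (C (a j) - C (b j)) > e/2"
    and tail: "\<And>j. measure (Ms (n j)) (C (b j)) \<le> e/8"
    and F: "\<And>j. F j = (\<Union>l\<in>{l. l < j \<and> even l}. C (a l) - C (b l))"
    and approx: "\<And>j. \<bar>measure (Ms (n j)) (F j) - limit_measure (F j)\<bar> \<le> e/16"
  shows False
proof -
  define E where "E l = C (a l) - C (b l)" for l
  define G where "G = (\<Union>l\<in>{l. even l}. E l)"
  have F_E: "F j = (\<Union>l\<in>{l. l < j \<and> even l}. E l)" for j
    by (simp add: F E_def)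
  have E_sets: "E l \<in> sets M" for l
    using C(1) by (auto simp: E_def)
  have F_sets: "F j \<in> sets M" for j
    unfolding F_E using E_sets by auto
  have G_sets: "G \<in> sets M"
    unfolding G_def using E_sets by auto
  have "incseq a"
    using ab by (intro incseq_SucI) (meson less_imp_le order_trans)
  then have b_le_a: "b l \<le> a j" if "l < j" for l j
    using ab(2)[of l] that by (meson Suc_leI incseqD order_trans)
  have E_later: "E j \<subseteq> C (b l)" if "l < j" for l j
    using decseqD[OF C(2) b_le_a[OF that]] by (auto simp: E_def)
  have even_lower: "measure (Ms (n j)) G \<ge> limit_measure (F j) + 7*e/16" if "even j" for j
  proof -
    have "E l \<inter> E j = {}" if "l < j" for l
      using E_later[OF that] by (auto simp: E_def)
    then have "F j \<inter> E j = {}"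
      unfolding F_E by blast
    then have "measure (Ms (n j)) (F j \<union> E j) = measure (Ms (n j)) (F j) + measure (Ms (n j)) (E j)"
      using finite_measure.finite_measure_Union[OF finite_measure_Ms] F_sets E_sets by simp
    moreover have "F j \<union> E j \<subseteq> G"
      using that unfolding F_E G_def by auto
    then have "measure (Ms (n j)) (F j \<union> E j) \<le> measure (Ms (n j)) G"
      using measure_Ms_mono G_sets by blast
    ultimately show ?thesis
      using hump[of j] approx[of j] unfolding E_def by linarith
  qed
  have odd_upper: "measure (Ms (n j)) G \<le> limit_measure (F j) + 3*e/16" if "odd j" for j
  proof -
    have "G \<subseteq> F j \<union> C (b j)"
    proof
      fix x assume "x \<in> G"
      then obtain l where "even l" "x \<in> E l"
        unfolding G_def by blast
      moreover have "l \<noteq> j"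
        using \<open>odd j\<close> \<open>even l\<close> by auto
      ultimately show "x \<in> F j \<union> C (b j)"
        unfolding F_E using E_later[of j l] by (auto simp: nat_neq_iff)
    qed
    then have "measure (Ms (n j)) G \<le> measure (Ms (n j)) (F j \<union> C (b j))"
      using measure_Ms_mono C(1) F_sets by blast
    also have "\<dots> \<le> measure (Ms (n j)) (F j) + measure (Ms (n j)) (C (b j))"
      using C(1) F_sets by (intro measure_Un_le) auto
    finally show ?thesis
      using tail[of j] approx[of j] by linarith
  qed
  \<comment> \<open>Both terms of \<open>d j\<close> below converge, yet \<open>d\<close> oscillates by \<open>e/4\<close> between even and odd \<open>j\<close>.\<close>
  have "incseq (\<lambda>j. limit_measure (F j))"
    by (intro incseq_SucI limit_measure_mono F_sets) (auto simp: F_E less_Suc_eq)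
  moreover have "limit_measure (F j) \<le> limit_measure (space M)" for j
    using F_sets by (intro limit_measure_mono) (auto dest: sets.sets_into_space)
  ultimately obtain s where s: "(\<lambda>j. limit_measure (F j)) \<longlonglongrightarrow> s"
    using incseq_convergent by blast
  have "(\<lambda>j. measure (Ms (n j)) G) \<longlonglongrightarrow> limit_measure G"
    using LIMSEQ_subseq_LIMSEQ[OF LIMSEQ_limit_measure[OF G_sets] n] by (simp add: comp_def)
  then have "(\<lambda>j. measure (Ms (n j)) G - limit_measure (F j)) \<longlonglongrightarrow> limit_measure G - s"
    using s by (rule tendsto_diff)
  then have "\<forall>\<^sub>F j in sequentially.
      dist (measure (Ms (n j)) G - limit_measure (F j)) (limit_measure G - s) < e/8"
    using \<open>e > 0\<close> by (intro tendstoD) auto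
  then obtain j0 where j0: "\<And>j. j \<ge> j0 \<Longrightarrow>
      dist (measure (Ms (n j)) G - limit_measure (F j)) (limit_measure G - s) < e/8"
    unfolding eventually_sequentially by blast
  define d where "d j = measure (Ms (n j)) G - limit_measure (F j)" for j
  have "d (2 * j0) \<ge> 7*e/16" "d (Suc (2 * j0)) \<le> 3*e/16"
    using even_lower[of "2 * j0"] odd_upper[of "Suc (2 * j0)"] by (simp_all add: d_def)
  moreover have "\<bar>d (2 * j0) - (limit_measure G - s)\<bar> < e/8"
      "\<bar>d (Suc (2 * j0)) - (limit_measure G - s)\<bar> < e/8"
    using j0[of "2 * j0"] j0[of "Suc (2 * j0)"] by (simp_all add: d_def dist_real_def)
  ultimately show False
    by (simp only: abs_less_iff) linarith
qed

lemma gliding_hump_sequence: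
  assumes C: "range C \<subseteq> sets M" "decseq C" "(\<Inter>N. C N) = {}"
    and hump: "\<And>N. \<exists>n. measure (Ms n) (C N) > e" and "e > 0"
  obtains n a b F where "strict_mono n" "\<And>j. a j < b j" "\<And>j. b j \<le> a (Suc j)"
    "\<And>j. measure (Ms (n j)) (C (a j) - C (b j)) > e/2"
    "\<And>j. measure (Ms (n j)) (C (b j)) \<le> e/8"
    "\<And>j. F j = (\<Union>l\<in>{l. l < j \<and> even l}. C (a l) - C (b l))"
    "\<And>j. \<bar>measure (Ms (n j)) (F j) - limit_measure (F j)\<bar> \<le> e/16"
proof -
  \<comment> \<open>\<open>F\<close> is part of the state because each new hump is chosen so that \<open>limit_measure\<close> is approximated on it.\<close>
  define Hump where "Hump j = (\<lambda>(n, a, b, F). F \<in> sets M \<and> (j = 0 \<longrightarrow> F = {}) \<and> a < b \<and>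
      measure (Ms n) (C a - C b) > e/2 \<and> measure (Ms n) (C b) \<le> e/8 \<and>
      \<bar>measure (Ms n) F - limit_measure F\<bar> \<le> e/16)" for j :: nat
  define Extends where "Extends j = (\<lambda>(n :: nat, a :: nat, b, F) (n', a', b' :: nat, F' :: 'a set).
      n < n' \<and> b \<le> a' \<and> F' = F \<union> (if even j then C a - C b else {}))" for j :: nat
  have "\<exists>x. Hump 0 x"
  proof -
    obtain n a b where "n \<ge> 0" "a \<ge> 0" "a < b"
      "measure (Ms n) (C a - C b) > e/2" "measure (Ms n) (C b) \<le> e/8"
      "\<bar>measure (Ms n) {} - limit_measure {}\<bar> \<le> e/16"
      by (rule gliding_hump_step[OF C hump \<open>e > 0\<close> sets.empty_sets])
    then have "Hump 0 (n, a, b, {})"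
      by (simp add: Hump_def)
    then show ?thesis ..
  qed
  moreover have "\<exists>y. Hump (Suc j) y \<and> Extends j x y" if "Hump j x" for j x
  proof -
    obtain n a b F where x: "x = (n, a, b, F)"
      by (cases x) auto
    define F' where "F' = F \<union> (if even j then C a - C b else {})"
    have "F' \<in> sets M"
      using that C(1) by (auto simp: x Hump_def F'_def)
    obtain n' a' b' where "n' \<ge> Suc n" "a' \<ge> b" "a' < b'"
      "measure (Ms n') (C a' - C b') > e/2" "measure (Ms n') (C b') \<le> e/8"
      "\<bar>measure (Ms n') F' - limit_measure F'\<bar> \<le> e/16"
      by (rule gliding_hump_step[OF C hump \<open>e > 0\<close> \<open>F' \<in> sets M\<close>])
    then have "Hump (Suc j) (n', a', b', F') \<and> Extends j x (n', a', b', F')"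
      using \<open>F' \<in> sets M\<close> by (simp add: x Hump_def Extends_def F'_def)
    then show ?thesis ..
  qed
  ultimately obtain f where f: "\<And>j. Hump j (f j) \<and> Extends j (f j) (f (Suc j))"
    using dependent_nat_choice[of Hump Extends] by blast
  define n where "n j = fst (f j)" for j
  define a where "a j = fst (snd (f j))" for j
  define b where "b j = fst (snd (snd (f j)))" for j
  define F where "F j = snd (snd (snd (f j)))" for j
  have f_eq: "f j = (n j, a j, b j, F j)" for j
    by (simp add: n_def a_def b_def F_def)
  have hump_facts: "F 0 = {}" "a j < b j" "measure (Ms (n j)) (C (a j) - C (b j)) > e/2"
    "measure (Ms (n j)) (C (b j)) \<le> e/8"
    "\<bar>measure (Ms (n j)) (F j) - limit_measure (F j)\<bar> \<le> e/16" for j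
    using f[of j] f[of 0] by (simp_all add: f_eq Hump_def)
  have step_facts: "n j < n (Suc j)" "b j \<le> a (Suc j)"
    "F (Suc j) = F j \<union> (if even j then C (a j) - C (b j) else {})" for j
    using f[of j] by (simp_all add: f_eq Extends_def)
  have F_closed: "F j = (\<Union>l\<in>{l. l < j \<and> even l}. C (a l) - C (b l))" for j
    by (induction j) (auto simp: hump_facts(1) step_facts(3) less_Suc_eq)
  have "strict_mono n"
    using step_facts(1) by (rule strict_monoI_Suc)
  from that[OF this hump_facts(2) step_facts(2) hump_facts(3,4) F_closed hump_facts(5)] show ?thesis .
qed

lemma uniform_continuity_from_above:
  assumes C: "range C \<subseteq> sets M" "decseq C" "(\<Inter>N. C N) = {}" and "e > 0"
  shows "\<exists>N. \<forall>n. measure (Ms n) (C N) \<le> e"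
proof (rule ccontr)
  assume "\<not> ?thesis"
  then have hump: "\<And>N. \<exists>n. measure (Ms n) (C N) > e"
    by (auto simp: not_le)
  obtain n a b F where "strict_mono n" "\<And>j. a j < b j" "\<And>j. b j \<le> a (Suc j)"
    "\<And>j. measure (Ms (n j)) (C (a j) - C (b j)) > e/2"
    "\<And>j. measure (Ms (n j)) (C (b j)) \<le> e/8"
    "\<And>j. F j = (\<Union>l\<in>{l. l < j \<and> even l}. C (a l) - C (b l))"
    "\<And>j. \<bar>measure (Ms (n j)) (F j) - limit_measure (F j)\<bar> \<le> e/16"
    using gliding_hump_sequence[OF C hump \<open>e > 0\<close>] by blast
  then show False
    by (rule no_gliding_hump[OF C(1,2) \<open>e > 0\<close>])
qed

end

section \<open>Uniform limits and covariances of events\<close>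

lemma tendsto_SUP_abs_iff_uniform_limit:
  fixes h :: "'b \<Rightarrow> 'c \<Rightarrow> real"
  assumes bdd: "\<And>k. bdd_above ((\<lambda>i. \<bar>h k i\<bar>) ` I)" and "I \<noteq> {}"
  shows "((\<lambda>k. SUP i\<in>I. \<bar>h k i\<bar>) \<longlongrightarrow> 0) F \<longleftrightarrow> uniform_limit I h (\<lambda>_. 0) F"
proof
  assume lim: "((\<lambda>k. SUP i\<in>I. \<bar>h k i\<bar>) \<longlongrightarrow> 0) F"
  show "uniform_limit I h (\<lambda>_. 0) F"
  proof (rule uniform_limitI)
    fix e :: real assume "e > 0"
    with lim have "\<forall>\<^sub>F k in F. (SUP i\<in>I. \<bar>h k i\<bar>) < e"
      by (rule order_tendstoD)
    then show "\<forall>\<^sub>F k in F. \<forall>i\<in>I. dist (h k i) 0 < e"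
    proof eventually_elim
      case (elim k)
      show ?case
      proof
        fix i assume "i \<in> I"
        then have "\<bar>h k i\<bar> \<le> (SUP i\<in>I. \<bar>h k i\<bar>)"
          using bdd by (rule cSUP_upper)
        with elim show "dist (h k i) 0 < e"
          by simp
      qed
    qed
  qed
next
  assume unif: "uniform_limit I h (\<lambda>_. 0) F"
  show "((\<lambda>k. SUP i\<in>I. \<bar>h k i\<bar>) \<longlongrightarrow> 0) F"
  proof (rule order_tendstoI)
    fix a :: real assume "a < 0"
    obtain i where "i \<in> I"
      using \<open>I \<noteq> {}\<close> by blast
    have "\<bar>h k i\<bar> \<le> (SUP i\<in>I. \<bar>h k i\<bar>)" for k
      using cSUP_upper[OF \<open>i \<in> I\<close> bdd] .
    then show "\<forall>\<^sub>F k in F. a < (SUP i\<in>I. \<bar>h k i\<bar>)"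
      using \<open>a < 0\<close> by (intro always_eventually allI) (smt (verit) abs_ge_zero)
  next
    fix a :: real assume "a > 0"
    then have "\<forall>\<^sub>F k in F. \<forall>i\<in>I. dist (h k i) 0 < a/2"
      using unif by (intro uniform_limitD) auto
    then show "\<forall>\<^sub>F k in F. (SUP i\<in>I. \<bar>h k i\<bar>) < a"
    proof eventually_elim
      case (elim k)
      then have "(SUP i\<in>I. \<bar>h k i\<bar>) \<le> a/2"
        using \<open>I \<noteq> {}\<close> by (intro cSUP_least) auto
      then show ?case
        using \<open>a > 0\<close> by linarith
    qed
  qed
qed

context prob_space
begin

definition event_cov :: "'a set \<Rightarrow> 'a set \<Rightarrow> real" where
  "event_cov A B = prob (A \<inter> B) - prob A * prob B"

lemma event_cov_commute: "event_cov A B = event_cov B A"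
  by (simp add: event_cov_def Int_commute)

lemma event_cov_empty [simp]: "event_cov {} B = 0"
  by (simp add: event_cov_def)

lemma event_cov_compl:
  assumes "A \<in> events" "B \<in> events"
  shows "event_cov (space M - A) B = - event_cov A B"
proof -
  have "(space M - A) \<inter> B = B - A \<inter> B"
    using sets.sets_into_space[OF assms(2)] by blast
  then have "prob ((space M - A) \<inter> B) = prob B - prob (A \<inter> B)"
    using assms by (simp add: finite_measure_Diff)
  then show ?thesis
    unfolding event_cov_def prob_compl[OF assms(1)] by (simp add: algebra_simps)
qed

lemma event_cov_Un:
  assumes "A \<in> events" "A' \<in> events" "B \<in> events" "A \<inter> A' = {}"
  shows "event_cov (A \<union> A') B = event_cov A B + event_cov A' B"
proof -
  have "prob ((A \<union> A') \<inter> B) = prob (A \<inter> B) + prob (A' \<inter> B)"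
    using assms by (simp add: Int_Un_distrib2 finite_measure_Union disjoint_iff)
  moreover have "prob (A \<union> A') = prob A + prob A'"
    using assms by (simp add: finite_measure_Union)
  ultimately show ?thesis
    by (simp add: event_cov_def algebra_simps)
qed

lemma abs_event_cov_le:
  assumes "A \<in> events" "B \<in> events"
  shows "\<bar>event_cov A B\<bar> \<le> prob A"
proof -
  have "prob (A \<inter> B) \<le> prob A"
    using assms by (intro finite_measure_mono) auto
  moreover have "prob A * prob B \<le> prob A"
    using mult_left_le[of "prob B" "prob A"] by simp
  moreover have "0 \<le> prob (A \<inter> B)" "0 \<le> prob A * prob B"
    by simp_all
  ultimately show ?thesis
    unfolding event_cov_def by linarith
qed

end

section \<open>Uniform decorrelation along an asymptotically stationary system\<close>

locale asymptotically_stationary_system = prob_space +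
  fixes S :: "'a \<Rightarrow> 'a"
  assumes S_measurable: "S \<in> M \<rightarrow>\<^sub>M M"
    and asymptotically_stationary: "asymptotically_stationary M S"
begin

lemma funpow_measurable: "S ^^ n \<in> M \<rightarrow>\<^sub>M M"
  by (induction n) (auto intro: measurable_compose[OF _ S_measurable])

lemma preim_sets [simp]: "A \<in> events \<Longrightarrow> preim M S n A \<in> events"
  unfolding preim_def using funpow_measurable measurable_sets by blast

lemma preim_Un: "preim M S n (A \<union> B) = preim M S n A \<union> preim M S n B"
  by (auto simp: preim_def)

lemma preim_disjoint: "A \<inter> B = {} \<Longrightarrow> preim M S n A \<inter> preim M S n B = {}"
  by (auto simp: preim_def)

lemma preim_compl: "preim M S n (space M - A) = space M - preim M S n A"
  using measurable_space[OF funpow_measurable] by (auto simp: preim_def)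

lemma preim_preim: "preim M S k (preim M S i A) = preim M S (i + k) A"
  using measurable_space[OF funpow_measurable] by (auto simp: preim_def funpow_add)

lemma measure_distr_funpow: "A \<in> events \<Longrightarrow> measure (distr M M (S ^^ n)) A = prob (preim M S n A)"
  by (simp add: measure_distr[OF funpow_measurable] preim_def)

sublocale setwise_convergent_measures M "\<lambda>n. distr M M (S ^^ n)"
proof (rule setwise_convergent_measures.intro)
  fix n
  show "finite_measure (distr M M (S ^^ n))"
    using prob_space_distr[OF funpow_measurable] by (rule prob_space.axioms(1))
  show "sets (distr M M (S ^^ n)) = events"
    by simp
next
  fix X assume "X \<in> events"
  then show "convergent (\<lambda>n. measure (distr M M (S ^^ n)) X)"
    using asymptotically_stationary by (simp add: asymptotically_stationary_def measure_distr_funpow)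
qed

text \<open>
  The relation of the theorem is the instance \<open>p i k = i\<close>, \<open>W i k = S\<^sup>-\<^sup>(\<^sup>i\<^sup>+\<^sup>k\<^sup>) B\<close> with \<open>A\<close>
  varying, and also the instance \<open>p i k = i + k\<close>, \<open>W i k = S\<^sup>-\<^sup>i A\<close> with \<open>B\<close> varying.
\<close>

definition uniformly_decorrelated :: "(nat \<Rightarrow> nat \<Rightarrow> nat) \<Rightarrow> (nat \<Rightarrow> nat \<Rightarrow> 'a set) \<Rightarrow> 'a set \<Rightarrow> bool" where
  "uniformly_decorrelated p W X \<longleftrightarrow>
     uniform_limit {1..} (\<lambda>k i. event_cov (preim M S (p i k) X) (W i k)) (\<lambda>_. 0) sequentially"

lemma uniformly_decorrelated_empty: "uniformly_decorrelated p W {}"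
  by (simp add: uniformly_decorrelated_def preim_def uniform_limit_const)

lemma uniformly_decorrelated_compl:
  assumes W: "\<And>i k. W i k \<in> events" and X: "X \<in> events" "uniformly_decorrelated p W X"
  shows "uniformly_decorrelated p W (space M - X)"
proof -
  have "uniform_limit {1..} (\<lambda>k i. - event_cov (preim M S (p i k) X) (W i k)) (\<lambda>_. - 0) sequentially"
    using X(2) unfolding uniformly_decorrelated_def by (rule uniform_limit_uminus)
  then show ?thesis
    unfolding uniformly_decorrelated_def preim_compl using event_cov_compl W X(1) by simp
qed

lemma uniformly_decorrelated_Un:
  assumes W: "\<And>i k. W i k \<in> events" and "X \<in> events" "Y \<in> events" "X \<inter> Y = {}"
    and "uniformly_decorrelated p W X" "uniformly_decorrelated p W Y"
  shows "uniformly_decorrelated p W (X \<union> Y)"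
proof -
  have "uniform_limit {1..} (\<lambda>k i. event_cov (preim M S (p i k) X) (W i k)
      + event_cov (preim M S (p i k) Y) (W i k)) (\<lambda>_. 0 + 0) sequentially"
    using assms(5,6) unfolding uniformly_decorrelated_def by (rule uniform_limit_add)
  then show ?thesis
    unfolding uniformly_decorrelated_def preim_Un
    using event_cov_Un preim_disjoint W assms(2-4) by simp
qed

lemma uniformly_decorrelated_UN:
  assumes W: "\<And>i k. W i k \<in> events"
    and A: "disjoint_family (A :: nat \<Rightarrow> 'a set)" "range A \<subseteq> events" "\<And>n. uniformly_decorrelated p W (A n)"
  shows "uniformly_decorrelated p W (\<Union>n. A n)"
proof -
  define U where "U N = (\<Union>n<N. A n)" for N
  define C where "C N = (\<Union>n. A n) - U N" for N
  have U_sets: "U N \<in> events" and C_sets: "C N \<in> events" for N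
    using A(2) by (auto simp: U_def C_def)
  have U: "uniformly_decorrelated p W (U N)" for N
  proof (induction N)
    case 0
    then show ?case by (simp add: U_def uniformly_decorrelated_empty)
  next
    case (Suc N)
    have "A n \<inter> A N = {}" if "n < N" for n
      using A(1) that by (simp add: disjoint_family_on_def)
    then have "U N \<inter> A N = {}"
      unfolding U_def by blast
    then have "uniformly_decorrelated p W (U N \<union> A N)"
      using uniformly_decorrelated_Un[OF W U_sets] A Suc by auto
    then show ?case
      by (simp add: U_def lessThan_Suc Un_commute)
  qed
  have "decseq C"
    by (auto simp: decseq_def C_def U_def)
  moreover have "(\<Inter>N. C N) = {}"
    by (auto simp: C_def U_def)
  show ?thesis
    unfolding uniformly_decorrelated_def
  proof (rule uniform_limitI)
    fix e :: real assume "e > 0"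
    \<comment> \<open>The tail \<open>C N\<close> is small under all iterates at once, so the bound is uniform in \<open>i\<close> and \<open>k\<close>.\<close>
    obtain N where N: "\<And>n. prob (preim M S n (C N)) \<le> e/2"
      using uniform_continuity_from_above[OF _ \<open>decseq C\<close> \<open>(\<Inter>N. C N) = {}\<close>, of "e/2"]
        C_sets \<open>e > 0\<close> by (auto simp: measure_distr_funpow)
    have "\<forall>\<^sub>F k in sequentially. \<forall>i\<in>{1..}. dist (event_cov (preim M S (p i k) (U N)) (W i k)) 0 < e/2"
      using U[of N] \<open>e > 0\<close> unfolding uniformly_decorrelated_def by (intro uniform_limitD) auto
    then show "\<forall>\<^sub>F k in sequentially. \<forall>i\<in>{1..}. dist (event_cov (preim M S (p i k) (\<Union>n. A n)) (W i k)) 0 < e"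
    proof eventually_elim
      case (elim k)
      show ?case
      proof
        fix i :: nat assume "i \<in> {1..}"
        have "(\<Union>n. A n) = U N \<union> C N" "U N \<inter> C N = {}"
          by (auto simp: C_def U_def)
        then have "event_cov (preim M S (p i k) (\<Union>n. A n)) (W i k)
            = event_cov (preim M S (p i k) (U N)) (W i k) + event_cov (preim M S (p i k) (C N)) (W i k)"
          using event_cov_Un preim_disjoint U_sets C_sets W by (simp add: preim_Un)
        moreover have "\<bar>event_cov (preim M S (p i k) (C N)) (W i k)\<bar> \<le> e/2"
          using abs_event_cov_le[of "preim M S (p i k) (C N)" "W i k"] N[of "p i k"] C_sets W by simp
        moreover have "\<bar>event_cov (preim M S (p i k) (U N)) (W i k)\<bar> < e/2"
          using elim \<open>i \<in> {1..}\<close> by simp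
        ultimately show "dist (event_cov (preim M S (p i k) (\<Union>n. A n)) (W i k)) 0 < e"
          using abs_triangle_ineq[of "event_cov (preim M S (p i k) (U N)) (W i k)"
              "event_cov (preim M S (p i k) (C N)) (W i k)"] by simp
      qed
    qed
  qed
qed

lemma uniformly_decorrelated_sigma_sets:
  assumes P: "Int_stable P" "P \<subseteq> events" "events = sigma_sets (space M) P"
    and W: "\<And>i k. W i k \<in> events"
    and base: "\<And>X. X \<in> P \<Longrightarrow> uniformly_decorrelated p W X"
    and X: "X \<in> events"
  shows "uniformly_decorrelated p W X"
proof -
  have "P \<subseteq> Pow (space M)"
    using P(2) sets.sets_into_space by blast
  from P(1) this X[unfolded P(3)] show ?thesis
  proof (induction X rule: sigma_sets_induct_disjoint)
    case (basic A)
    then show ?case by (rule base)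
  next
    case empty
    then show ?case by (rule uniformly_decorrelated_empty)
  next
    case (compl A)
    then show ?case using uniformly_decorrelated_compl[OF W] P(3) by simp
  next
    case (union A)
    then show ?case using uniformly_decorrelated_UN[OF W, of A] P(3) by simp
  qed
qed

lemma mix_rel_iff_uniform_limit:
  assumes "A \<in> events" "B \<in> events"
  shows "mix_rel M S A B \<longleftrightarrow>
    uniform_limit {1..} (\<lambda>k i. event_cov (preim M S i A) (preim M S (i + k) B)) (\<lambda>_. 0) sequentially"
proof -
  have "\<bar>event_cov (preim M S i A) (preim M S (i + k) B)\<bar> \<le> 1" for i k
    by (rule order_trans[OF abs_event_cov_le prob_le_1]) (simp_all add: assms)
  then have "bdd_above ((\<lambda>i. \<bar>event_cov (preim M S i A) (preim M S (i + k) B)\<bar>) ` {1..})" for k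
    by (intro bdd_aboveI2) auto
  then show ?thesis
    unfolding mix_rel_def preim_preim event_cov_def[symmetric]
    by (rule tendsto_SUP_abs_iff_uniform_limit) simp
qed

lemma mix_rel_iff_decorrelated_left:
  "A \<in> events \<Longrightarrow> B \<in> events \<Longrightarrow>
    mix_rel M S A B \<longleftrightarrow> uniformly_decorrelated (\<lambda>i k. i) (\<lambda>i k. preim M S (i + k) B) A"
  by (simp add: mix_rel_iff_uniform_limit uniformly_decorrelated_def)

lemma mix_rel_iff_decorrelated_right:
  "A \<in> events \<Longrightarrow> B \<in> events \<Longrightarrow>
    mix_rel M S A B \<longleftrightarrow> uniformly_decorrelated (\<lambda>i k. i + k) (\<lambda>i k. preim M S i A) B"
  by (simp add: mix_rel_iff_uniform_limit uniformly_decorrelated_def event_cov_commute)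

lemma mix_rel_sigma_sets_left:
  assumes P: "Int_stable P" "P \<subseteq> events" "events = sigma_sets (space M) P"
    and B: "B \<in> events" and base: "\<And>A. A \<in> P \<Longrightarrow> mix_rel M S A B"
    and A: "A \<in> events"
  shows "mix_rel M S A B"
proof -
  have "uniformly_decorrelated (\<lambda>i k. i) (\<lambda>i k. preim M S (i + k) B) A"
  proof (rule uniformly_decorrelated_sigma_sets[OF P _ _ A])
    show "preim M S (i + k) B \<in> events" for i k
      using B by simp
    show "uniformly_decorrelated (\<lambda>i k. i) (\<lambda>i k. preim M S (i + k) B) X" if "X \<in> P" for X
      using that P(2) B base mix_rel_iff_decorrelated_left by blast
  qed
  with A B show ?thesis
    by (simp add: mix_rel_iff_decorrelated_left)
qed

lemma mix_rel_sigma_sets_right: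
  assumes P: "Int_stable P" "P \<subseteq> events" "events = sigma_sets (space M) P"
    and A: "A \<in> events" and base: "\<And>B. B \<in> P \<Longrightarrow> mix_rel M S A B"
    and B: "B \<in> events"
  shows "mix_rel M S A B"
proof -
  have "uniformly_decorrelated (\<lambda>i k. i + k) (\<lambda>i k. preim M S i A) B"
  proof (rule uniformly_decorrelated_sigma_sets[OF P _ _ B])
    show "preim M S i A \<in> events" for i
      using A by simp
    show "uniformly_decorrelated (\<lambda>i k. i + k) (\<lambda>i k. preim M S i A) X" if "X \<in> P" for X
      using that P(2) A base mix_rel_iff_decorrelated_right by blast
  qed
  with A B show ?thesis
    by (simp add: mix_rel_iff_decorrelated_right)
qed

end

theorem lemma2p2:
  fixes M :: "'a measure" and S :: "'a \<Rightarrow> 'a" and P :: "'a set set"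
  assumes "prob_space M"
    and "S \<in> M \<rightarrow>\<^sub>M M"
    and "asymptotically_stationary M S"
    and "Int_stable P" and "P \<subseteq> sets M"
    and "sets M = sigma_sets (space M) P"
    and "\<forall>A\<in>P. \<forall>B\<in>P. mix_rel M S A B"
  shows "\<forall>A\<in>sets M. \<forall>B\<in>sets M. mix_rel M S A B"
proof -
  interpret asymptotically_stationary_system M S
    using assms(1-3) by (simp add: asymptotically_stationary_system_def asymptotically_stationary_system_axioms_def)
  have mix_P: "mix_rel M S A B" if "A \<in> sets M" "B \<in> P" for A B
    using mix_rel_sigma_sets_left[OF assms(4-6)] assms(5,7) that by blast
  show ?thesis
    using mix_rel_sigma_sets_right[OF assms(4-6)] mix_P by blast
qed

end
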